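(* Let $\mathcal{C}$ be a peircean bicategory. For every arrow $c:X\to Y$, $(\neg c)^\dagger=\neg(c^\dagger)$.
   Context: Composition in diagrammatic order. A cartesian bicategory is a poset-enriched symmetric monoidal category with, for each $X$, commutative comonoid $(\mathrm{copy}_X,\mathrm{disc}_X)$ and monoid $(\mathrm{cocopy}_X,\mathrm{codisc}_X)$ forming special Frobenius bimonoids, comonoid left adjoint to monoid, every arrow $c$ satisfying $c;\mathrm{copy}\le\mathrm{copy};(c\otimes c)$ and $c;\mathrm{disc}\le\mathrm{disc}$, with standard coherence. A map is an arrow $f$ with $f;\mathrm{copy}=\mathrm{copy};(f\otimes f)$ and $f;\mathrm{disc}=\mathrm{disc}$. A peircean bicategory is a cartesian bicategory whose homsets carry Boolean algebras (with the given order) such that $f;\neg c=\neg(f;c)$ for every map $f:X\to Y$ and arrow $c:Y\to Z$. The converse of $c:X\to Y$ is $c^\dagger=(\mathrm{id}_Y\otimes(\mathrm{codisc}_X;\mathrm{copy}_X));(\mathrm{id}_Y\otimes c\otimes\mathrm{id}_X);((\mathrm{cocopy}_Y;\mathrm{disc}_Y)\otimes\mathrm{id}_X):Y\to X$. *)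

theory Defs
  imports Main
begin

text \<open>Composition is diagrammatic: seq C f g = f ; g (first f, then g).
  The symmetric monoidal structure is taken to be strict.\<close>

record ('o, 'a) pbicat =
  arr    :: "'a \<Rightarrow> bool"
  dom    :: "'a \<Rightarrow> 'o"
  cod    :: "'a \<Rightarrow> 'o"
  seq    :: "'a \<Rightarrow> 'a \<Rightarrow> 'a"
  idt    :: "'o \<Rightarrow> 'a"
  otim   :: "'o \<Rightarrow> 'o \<Rightarrow> 'o"
  unito  :: "'o"
  tens   :: "'a \<Rightarrow> 'a \<Rightarrow> 'a"
  sym    :: "'o \<Rightarrow> 'o \<Rightarrow> 'a"
  le     :: "'a \<Rightarrow> 'a \<Rightarrow> bool"
  meet   :: "'a \<Rightarrow> 'a \<Rightarrow> 'a"
  join   :: "'a \<Rightarrow> 'a \<Rightarrow> 'a"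
  top    :: "'o \<Rightarrow> 'o \<Rightarrow> 'a"
  bot    :: "'o \<Rightarrow> 'o \<Rightarrow> 'a"
  neg    :: "'a \<Rightarrow> 'a"
  copy   :: "'o \<Rightarrow> 'a"
  disc   :: "'o \<Rightarrow> 'a"
  cocopy :: "'o \<Rightarrow> 'a"
  codisc :: "'o \<Rightarrow> 'a"

definition hom :: "('o, 'a, 'z) pbicat_scheme \<Rightarrow> 'o \<Rightarrow> 'o \<Rightarrow> 'a set" where
  "hom C X Y = {c. arr C c \<and> dom C c = X \<and> cod C c = Y}"

definition category :: "('o, 'a, 'z) pbicat_scheme \<Rightarrow> bool" where
  "category C \<longleftrightarrow>
     (\<forall>X. idt C X \<in> hom C X X)
   \<and> (\<forall>f g. arr C f \<and> arr C g \<and> cod C f = dom C g \<longrightarrow>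
        seq C f g \<in> hom C (dom C f) (cod C g))
   \<and> (\<forall>f. arr C f \<longrightarrow> seq C (idt C (dom C f)) f = f \<and> seq C f (idt C (cod C f)) = f)
   \<and> (\<forall>f g h. arr C f \<and> arr C g \<and> arr C h \<and> cod C f = dom C g \<and> cod C g = dom C h \<longrightarrow>
        seq C (seq C f g) h = seq C f (seq C g h))"

definition strict_symmetric_monoidal :: "('o, 'a, 'z) pbicat_scheme \<Rightarrow> bool" where
  "strict_symmetric_monoidal C \<longleftrightarrow>
     category C
   \<and> (\<forall>X Y Z. otim C X (otim C Y Z) = otim C (otim C X Y) Z)
   \<and> (\<forall>X. otim C (unito C) X = X \<and> otim C X (unito C) = X)
   \<and> (\<forall>f g. arr C f \<and> arr C g \<longrightarrow>
        tens C f g \<in> hom C (otim C (dom C f) (dom C g)) (otim C (cod C f) (cod C g)))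
   \<and> (\<forall>X Y. tens C (idt C X) (idt C Y) = idt C (otim C X Y))
   \<and> (\<forall>f g h k. arr C f \<and> arr C g \<and> arr C h \<and> arr C k \<and> cod C f = dom C g \<and> cod C h = dom C k
        \<longrightarrow> tens C (seq C f g) (seq C h k) = seq C (tens C f h) (tens C g k))
   \<and> (\<forall>f g h. arr C f \<and> arr C g \<and> arr C h \<longrightarrow> tens C (tens C f g) h = tens C f (tens C g h))
   \<and> (\<forall>f. arr C f \<longrightarrow> tens C (idt C (unito C)) f = f \<and> tens C f (idt C (unito C)) = f)
   \<and> (\<forall>X Y. sym C X Y \<in> hom C (otim C X Y) (otim C Y X))
   \<and> (\<forall>f g. arr C f \<and> arr C g \<longrightarrow>
        seq C (tens C f g) (sym C (cod C f) (cod C g)) = seq C (sym C (dom C f) (dom C g)) (tens C g f))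
   \<and> (\<forall>X Y. seq C (sym C X Y) (sym C Y X) = idt C (otim C X Y))
   \<and> (\<forall>X Y Z. sym C X (otim C Y Z) =
        seq C (tens C (sym C X Y) (idt C Z)) (tens C (idt C Y) (sym C X Z)))"

definition poset_enriched :: "('o, 'a, 'z) pbicat_scheme \<Rightarrow> bool" where
  "poset_enriched C \<longleftrightarrow>
     (\<forall>f g. le C f g \<longrightarrow> arr C f \<and> arr C g \<and> dom C f = dom C g \<and> cod C f = cod C g)
   \<and> (\<forall>f. arr C f \<longrightarrow> le C f f)
   \<and> (\<forall>f g. le C f g \<and> le C g f \<longrightarrow> f = g)
   \<and> (\<forall>f g h. le C f g \<and> le C g h \<longrightarrow> le C f h)
   \<and> (\<forall>f f' g g'. le C f f' \<and> le C g g' \<and> cod C f = dom C g \<longrightarrow> le C (seq C f g) (seq C f' g'))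
   \<and> (\<forall>f f' g g'. le C f f' \<and> le C g g' \<longrightarrow> le C (tens C f g) (tens C f' g'))"

definition cartesian_bicategory :: "('o, 'a, 'z) pbicat_scheme \<Rightarrow> bool" where
  "cartesian_bicategory C \<longleftrightarrow>
     strict_symmetric_monoidal C \<and> poset_enriched C
   \<and> (\<forall>X. copy C X \<in> hom C X (otim C X X) \<and> disc C X \<in> hom C X (unito C)
        \<and> cocopy C X \<in> hom C (otim C X X) X \<and> codisc C X \<in> hom C (unito C) X)
   \<comment> \<open>commutative comonoid\<close>
   \<and> (\<forall>X. seq C (copy C X) (tens C (copy C X) (idt C X)) = seq C (copy C X) (tens C (idt C X) (copy C X))
        \<and> seq C (copy C X) (tens C (disc C X) (idt C X)) = idt C X
        \<and> seq C (copy C X) (tens C (idt C X) (disc C X)) = idt C X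
        \<and> seq C (copy C X) (sym C X X) = copy C X)
   \<comment> \<open>commutative monoid\<close>
   \<and> (\<forall>X. seq C (tens C (cocopy C X) (idt C X)) (cocopy C X) = seq C (tens C (idt C X) (cocopy C X)) (cocopy C X)
        \<and> seq C (tens C (codisc C X) (idt C X)) (cocopy C X) = idt C X
        \<and> seq C (tens C (idt C X) (codisc C X)) (cocopy C X) = idt C X
        \<and> seq C (sym C X X) (cocopy C X) = cocopy C X)
   \<comment> \<open>special Frobenius\<close>
   \<and> (\<forall>X. seq C (tens C (copy C X) (idt C X)) (tens C (idt C X) (cocopy C X)) = seq C (cocopy C X) (copy C X)
        \<and> seq C (tens C (idt C X) (copy C X)) (tens C (cocopy C X) (idt C X)) = seq C (cocopy C X) (copy C X)
        \<and> seq C (copy C X) (cocopy C X) = idt C X)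
   \<comment> \<open>comonoid left adjoint to monoid\<close>
   \<and> (\<forall>X. le C (idt C X) (seq C (copy C X) (cocopy C X))
        \<and> le C (seq C (cocopy C X) (copy C X)) (idt C (otim C X X))
        \<and> le C (idt C X) (seq C (disc C X) (codisc C X))
        \<and> le C (seq C (codisc C X) (disc C X)) (idt C (unito C)))
   \<comment> \<open>every arrow is a lax comonoid morphism\<close>
   \<and> (\<forall>c. arr C c \<longrightarrow>
        le C (seq C c (copy C (cod C c))) (seq C (copy C (dom C c)) (tens C c c))
      \<and> le C (seq C c (disc C (cod C c))) (disc C (dom C c)))
   \<comment> \<open>coherence with the monoidal structure\<close>
   \<and> (\<forall>X Y. copy C (otim C X Y) =
          seq C (tens C (copy C X) (copy C Y)) (tens C (tens C (idt C X) (sym C X Y)) (idt C Y))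
        \<and> disc C (otim C X Y) = tens C (disc C X) (disc C Y)
        \<and> cocopy C (otim C X Y) =
          seq C (tens C (tens C (idt C X) (sym C Y X)) (idt C Y)) (tens C (cocopy C X) (cocopy C Y))
        \<and> codisc C (otim C X Y) = tens C (codisc C X) (codisc C Y))
   \<and> copy C (unito C) = idt C (unito C) \<and> disc C (unito C) = idt C (unito C)
   \<and> cocopy C (unito C) = idt C (unito C) \<and> codisc C (unito C) = idt C (unito C)"

definition boolean_homs :: "('o, 'a, 'z) pbicat_scheme \<Rightarrow> bool" where
  "boolean_homs C \<longleftrightarrow> (\<forall>X Y.
       top C X Y \<in> hom C X Y \<and> bot C X Y \<in> hom C X Y
     \<and> (\<forall>h\<in>hom C X Y. le C h (top C X Y) \<and> le C (bot C X Y) h)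
     \<and> (\<forall>f\<in>hom C X Y. \<forall>g\<in>hom C X Y.
          meet C f g \<in> hom C X Y \<and> join C f g \<in> hom C X Y
        \<and> le C (meet C f g) f \<and> le C (meet C f g) g
        \<and> le C f (join C f g) \<and> le C g (join C f g)
        \<and> (\<forall>h\<in>hom C X Y. le C h f \<and> le C h g \<longrightarrow> le C h (meet C f g))
        \<and> (\<forall>h\<in>hom C X Y. le C f h \<and> le C g h \<longrightarrow> le C (join C f g) h)
        \<and> (\<forall>h\<in>hom C X Y. meet C f (join C g h) = join C (meet C f g) (meet C f h)))
     \<and> (\<forall>f\<in>hom C X Y. neg C f \<in> hom C X Y
        \<and> meet C f (neg C f) = bot C X Y \<and> join C f (neg C f) = top C X Y))"

definition is_map :: "('o, 'a, 'z) pbicat_scheme \<Rightarrow> 'a \<Rightarrow> bool" where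
  "is_map C f \<longleftrightarrow> arr C f
     \<and> seq C f (copy C (cod C f)) = seq C (copy C (dom C f)) (tens C f f)
     \<and> seq C f (disc C (cod C f)) = disc C (dom C f)"

definition peircean_bicategory :: "('o, 'a, 'z) pbicat_scheme \<Rightarrow> bool" where
  "peircean_bicategory C \<longleftrightarrow> cartesian_bicategory C \<and> boolean_homs C
     \<and> (\<forall>f c. is_map C f \<and> arr C c \<and> cod C f = dom C c \<longrightarrow>
           seq C f (neg C c) = neg C (seq C f c))"

definition conv :: "('o, 'a, 'z) pbicat_scheme \<Rightarrow> 'a \<Rightarrow> 'a" where
  "conv C c = (let X = dom C c; Y = cod C c in
     seq C (seq C (tens C (idt C Y) (seq C (codisc C X) (copy C X)))
                  (tens C (tens C (idt C Y) c) (idt C X)))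
           (tens C (seq C (cocopy C Y) (disc C Y)) (idt C X)))"

end

theory Submission
  imports Defs
begin

(* With cup X = codisc X ; copy X and cap X = cocopy X ; disc X, the converse of c bends the
   wires of c with a cup on one side and a cap on the other. Bending them the opposite way gives
   a second operation left_conv, and the snake equations, which follow from the Frobenius and
   (co)unit laws, make conv and left_conv mutually inverse between hom X Y and hom Y X. Both are
   monotone by the poset enrichment, so conv is an order isomorphism between two Boolean
   algebras and therefore preserves complements. *)

locale poset_enriched_cat =
  fixes C :: "('o, 'a, 'z) pbicat_scheme"
  assumes poset_enriched: "poset_enriched C"
begin

lemma le_arr: "le C f g \<Longrightarrow> arr C f \<and> arr C g \<and> dom C f = dom C g \<and> cod C f = cod C g"
  and le_refl: "arr C f \<Longrightarrow> le C f f"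
  and le_antisym: "le C f g \<Longrightarrow> le C g f \<Longrightarrow> f = g"
  and le_seq: "le C f f' \<Longrightarrow> le C g g' \<Longrightarrow> cod C f = dom C g \<Longrightarrow> le C (seq C f g) (seq C f' g')"
  and le_tens: "le C f f' \<Longrightarrow> le C g g' \<Longrightarrow> le C (tens C f g) (tens C f' g')"
  using poset_enriched unfolding poset_enriched_def by blast+

end

locale boolean_homsets = poset_enriched_cat +
  assumes boolean_homs: "boolean_homs C"
begin

lemma bot_hom: "bot C X Y \<in> hom C X Y"
  and top_hom: "top C X Y \<in> hom C X Y"
  and bot_le: "h \<in> hom C X Y \<Longrightarrow> le C (bot C X Y) h"
  and le_top: "h \<in> hom C X Y \<Longrightarrow> le C h (top C X Y)"
  and meet_hom: "f \<in> hom C X Y \<Longrightarrow> g \<in> hom C X Y \<Longrightarrow> meet C f g \<in> hom C X Y"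
  and join_hom: "f \<in> hom C X Y \<Longrightarrow> g \<in> hom C X Y \<Longrightarrow> join C f g \<in> hom C X Y"
  and meet_le1: "f \<in> hom C X Y \<Longrightarrow> g \<in> hom C X Y \<Longrightarrow> le C (meet C f g) f"
  and meet_le2: "f \<in> hom C X Y \<Longrightarrow> g \<in> hom C X Y \<Longrightarrow> le C (meet C f g) g"
  and join_ge1: "f \<in> hom C X Y \<Longrightarrow> g \<in> hom C X Y \<Longrightarrow> le C f (join C f g)"
  and join_ge2: "f \<in> hom C X Y \<Longrightarrow> g \<in> hom C X Y \<Longrightarrow> le C g (join C f g)"
  and meet_greatest: "\<lbrakk>f \<in> hom C X Y; g \<in> hom C X Y; h \<in> hom C X Y; le C h f; le C h g\<rbrakk>
      \<Longrightarrow> le C h (meet C f g)"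
  and join_least: "\<lbrakk>f \<in> hom C X Y; g \<in> hom C X Y; h \<in> hom C X Y; le C f h; le C g h\<rbrakk>
      \<Longrightarrow> le C (join C f g) h"
  and meet_join_distrib: "\<lbrakk>f \<in> hom C X Y; g \<in> hom C X Y; h \<in> hom C X Y\<rbrakk>
      \<Longrightarrow> meet C f (join C g h) = join C (meet C f g) (meet C f h)"
  and neg_hom: "f \<in> hom C X Y \<Longrightarrow> neg C f \<in> hom C X Y"
  and meet_neg: "f \<in> hom C X Y \<Longrightarrow> meet C f (neg C f) = bot C X Y"
  and join_neg: "f \<in> hom C X Y \<Longrightarrow> join C f (neg C f) = top C X Y"
  using boolean_homs unfolding boolean_homs_def by blast+

lemma hom_arr: "f \<in> hom C X Y \<Longrightarrow> arr C f"
  unfolding hom_def by simp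

lemma meet_commute: "f \<in> hom C X Y \<Longrightarrow> g \<in> hom C X Y \<Longrightarrow> meet C f g = meet C g f"
  by (meson le_antisym meet_greatest meet_hom meet_le1 meet_le2)

lemma meet_top: "f \<in> hom C X Y \<Longrightarrow> meet C f (top C X Y) = f"
  by (meson hom_arr le_antisym le_refl le_top meet_greatest meet_le1 top_hom)

lemma join_bot: "f \<in> hom C X Y \<Longrightarrow> join C (bot C X Y) f = f"
  by (meson bot_hom bot_le hom_arr join_ge2 join_least le_antisym le_refl)

lemma neg_unique:
  assumes a: "a \<in> hom C X Y" and b: "b \<in> hom C X Y"
    and "meet C a b = bot C X Y" and "join C a b = top C X Y"
  shows "b = neg C a"
proof -
  have na: "neg C a \<in> hom C X Y"
    using a by (rule neg_hom)
  have "b = meet C b (join C a (neg C a))"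
    using meet_top[OF b] join_neg[OF a] by simp
  also have "\<dots> = meet C b (neg C a)"
    using meet_join_distrib[OF b a na] meet_commute[OF a b] join_bot[OF meet_hom[OF b na]] assms(3)
    by simp
  also have "\<dots> = meet C (neg C a) (join C a b)"
    using meet_join_distrib[OF na a b] meet_commute[OF a na] meet_neg[OF a]
      join_bot[OF meet_hom[OF na b]] meet_commute[OF b na] by simp
  also have "\<dots> = neg C a"
    using meet_top[OF na] assms(4) by simp
  finally show ?thesis .
qed

end

locale hom_order_iso = boolean_homsets +
  fixes F G :: "'a \<Rightarrow> 'a" and X Y X' Y' :: 'o
  assumes F_hom: "f \<in> hom C X Y \<Longrightarrow> F f \<in> hom C X' Y'"
    and G_hom: "g \<in> hom C X' Y' \<Longrightarrow> G g \<in> hom C X Y"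
    and G_F: "f \<in> hom C X Y \<Longrightarrow> G (F f) = f"
    and F_G: "g \<in> hom C X' Y' \<Longrightarrow> F (G g) = g"
    and F_mono: "le C f f' \<Longrightarrow> f \<in> hom C X Y \<Longrightarrow> le C (F f) (F f')"
    and G_mono: "le C g g' \<Longrightarrow> g \<in> hom C X' Y' \<Longrightarrow> le C (G g) (G g')"
begin

lemma F_meet:
  assumes f: "f \<in> hom C X Y" and g: "g \<in> hom C X Y"
  shows "F (meet C f g) = meet C (F f) (F g)"
proof (rule le_antisym)
  show "le C (F (meet C f g)) (meet C (F f) (F g))"
    by (meson F_hom F_mono f g meet_greatest meet_hom meet_le1 meet_le2)
  have Ff: "F f \<in> hom C X' Y'" and Fg: "F g \<in> hom C X' Y'"
    using f g by (simp_all add: F_hom)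
  define m where "m = meet C (F f) (F g)"
  have m: "m \<in> hom C X' Y'"
    unfolding m_def using Ff Fg by (rule meet_hom)
  have "le C (G m) f" and "le C (G m) g"
    unfolding m_def using G_mono[OF meet_le1[OF Ff Fg]] G_mono[OF meet_le2[OF Ff Fg]]
    by (simp_all add: G_F f g Ff Fg meet_hom)
  then have "le C (G m) (meet C f g)"
    using meet_greatest[OF f g G_hom[OF m]] by simp
  from F_mono[OF this G_hom[OF m]] show "le C m (F (meet C f g))"
    using F_G[OF m] by simp
qed

lemma F_join:
  assumes f: "f \<in> hom C X Y" and g: "g \<in> hom C X Y"
  shows "F (join C f g) = join C (F f) (F g)"
proof (rule le_antisym)
  show "le C (join C (F f) (F g)) (F (join C f g))"
    by (meson F_hom F_mono f g join_least join_hom join_ge1 join_ge2)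
  have Ff: "F f \<in> hom C X' Y'" and Fg: "F g \<in> hom C X' Y'"
    using f g by (simp_all add: F_hom)
  define j where "j = join C (F f) (F g)"
  have j: "j \<in> hom C X' Y'"
    unfolding j_def using Ff Fg by (rule join_hom)
  have "le C f (G j)" and "le C g (G j)"
    unfolding j_def using G_mono[OF join_ge1[OF Ff Fg]] G_mono[OF join_ge2[OF Ff Fg]]
    by (simp_all add: G_F f g Ff Fg)
  then have "le C (join C f g) (G j)"
    using join_least[OF f g G_hom[OF j]] by simp
  from F_mono[OF this join_hom[OF f g]] show "le C (F (join C f g)) j"
    using F_G[OF j] by simp
qed

lemma F_bot: "F (bot C X Y) = bot C X' Y'"
proof (rule le_antisym)
  have "le C (bot C X Y) (G (bot C X' Y'))"
    by (simp add: bot_hom bot_le G_hom)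
  from F_mono[OF this bot_hom] show "le C (F (bot C X Y)) (bot C X' Y')"
    by (simp add: F_G bot_hom)
  show "le C (bot C X' Y') (F (bot C X Y))"
    by (simp add: bot_hom bot_le F_hom)
qed

lemma F_top: "F (top C X Y) = top C X' Y'"
proof (rule le_antisym)
  have "le C (G (top C X' Y')) (top C X Y)"
    by (simp add: top_hom le_top G_hom)
  from F_mono[OF this G_hom[OF top_hom]] show "le C (top C X' Y') (F (top C X Y))"
    by (simp add: F_G top_hom)
  show "le C (F (top C X Y)) (top C X' Y')"
    by (simp add: top_hom le_top F_hom)
qed

lemma F_neg:
  assumes c: "c \<in> hom C X Y"
  shows "F (neg C c) = neg C (F c)"
proof (rule neg_unique)
  show "F c \<in> hom C X' Y'" and "F (neg C c) \<in> hom C X' Y'"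
    using c by (simp_all add: F_hom neg_hom)
  show "meet C (F c) (F (neg C c)) = bot C X' Y'"
    using F_meet[OF c neg_hom[OF c]] meet_neg[OF c] F_bot by simp
  show "join C (F c) (F (neg C c)) = top C X' Y'"
    using F_join[OF c neg_hom[OF c]] join_neg[OF c] F_top by simp
qed

end

definition cup :: "('o, 'a, 'z) pbicat_scheme \<Rightarrow> 'o \<Rightarrow> 'a" where
  "cup C X = seq C (codisc C X) (copy C X)"

definition cap :: "('o, 'a, 'z) pbicat_scheme \<Rightarrow> 'o \<Rightarrow> 'a" where
  "cap C X = seq C (cocopy C X) (disc C X)"

definition left_conv :: "('o, 'a, 'z) pbicat_scheme \<Rightarrow> 'a \<Rightarrow> 'a" where
  "left_conv C c = (let X = dom C c; Y = cod C c in
     seq C (tens C (cup C X) (idt C Y))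
       (seq C (tens C (idt C X) (tens C c (idt C Y))) (tens C (idt C X) (cap C Y))))"

locale cartesian_bicat =
  fixes C :: "('o, 'a, 'z) pbicat_scheme"
  assumes cartesian: "cartesian_bicategory C"
begin

abbreviation dcomp :: "'a \<Rightarrow> 'a \<Rightarrow> 'a"  (infixr "\<Zcomp>" 55)
  where "f \<Zcomp> g \<equiv> seq C f g"

abbreviation tensor :: "'a \<Rightarrow> 'a \<Rightarrow> 'a"  (infixr "\<otimes>" 60)
  where "f \<otimes> g \<equiv> tens C f g"

abbreviation ident :: "'o \<Rightarrow> 'a"  ("\<one>")
  where "\<one> \<equiv> idt C"

sublocale poset_enriched_cat
  using cartesian by unfold_locales (simp add: cartesian_bicategory_def)

lemma monoidal: "strict_symmetric_monoidal C"
  using cartesian unfolding cartesian_bicategory_def by blast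

lemma category: "category C"
  using monoidal unfolding strict_symmetric_monoidal_def by blast

lemma idt_arr [simp]: "arr C (\<one> X)" "dom C (\<one> X) = X" "cod C (\<one> X) = X"
  using category unfolding category_def hom_def by auto

lemma seq_arr [simp]:
  assumes "arr C f" "arr C g" "cod C f = dom C g"
  shows "arr C (f \<Zcomp> g)" "dom C (f \<Zcomp> g) = dom C f" "cod C (f \<Zcomp> g) = cod C g"
  using category assms unfolding category_def hom_def by auto

lemma seq_idt_left [simp]: "arr C f \<Longrightarrow> dom C f = X \<Longrightarrow> \<one> X \<Zcomp> f = f"
  and seq_idt_right [simp]: "arr C f \<Longrightarrow> cod C f = X \<Longrightarrow> f \<Zcomp> \<one> X = f"
  and seq_assoc [simp]: "\<lbrakk>arr C f; arr C g; arr C h; cod C f = dom C g; cod C g = dom C h\<rbrakk>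
      \<Longrightarrow> (f \<Zcomp> g) \<Zcomp> h = f \<Zcomp> g \<Zcomp> h"
  using category unfolding category_def by auto

lemma seq_pair_subst:
  assumes "f \<Zcomp> g = f' \<Zcomp> g'"
    and "arr C f" "arr C g" "arr C f'" "arr C g'" "arr C h"
    and "cod C f = dom C g" "cod C f' = dom C g'" "cod C g = dom C h"
  shows "f \<Zcomp> g \<Zcomp> h = f' \<Zcomp> g' \<Zcomp> h"
  using assms by (metis seq_arr(3) seq_assoc)

lemma seq_pair_cancel:
  assumes "f \<Zcomp> g = \<one> Z"
    and "arr C f" "arr C g" "arr C h" "cod C f = dom C g" "cod C g = dom C h"
  shows "f \<Zcomp> g \<Zcomp> h = h"
  using assms by (metis idt_arr(3) seq_arr(3) seq_assoc seq_idt_left)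

lemma tens_arr [simp]:
  assumes "arr C f" "arr C g"
  shows "arr C (f \<otimes> g)" "dom C (f \<otimes> g) = otim C (dom C f) (dom C g)"
    "cod C (f \<otimes> g) = otim C (cod C f) (cod C g)"
  using monoidal assms unfolding strict_symmetric_monoidal_def hom_def by auto

lemma otim_assoc [simp]: "otim C (otim C X Y) Z = otim C X (otim C Y Z)"
  and otim_unit [simp]: "otim C (unito C) X = X" "otim C X (unito C) = X"
  and idt_otim [simp]: "\<one> (otim C X Y) = \<one> X \<otimes> \<one> Y"
  and tens_assoc [simp]: "\<lbrakk>arr C f; arr C g; arr C h\<rbrakk> \<Longrightarrow> (f \<otimes> g) \<otimes> h = f \<otimes> g \<otimes> h"
  and tens_unit [simp]: "arr C f \<Longrightarrow> \<one> (unito C) \<otimes> f = f" "arr C f \<Longrightarrow> f \<otimes> \<one> (unito C) = f"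
  and interchange: "\<lbrakk>arr C f; arr C g; arr C h; arr C k; cod C f = dom C g; cod C h = dom C k\<rbrakk>
      \<Longrightarrow> (f \<Zcomp> g) \<otimes> (h \<Zcomp> k) = (f \<otimes> h) \<Zcomp> (g \<otimes> k)"
  using monoidal unfolding strict_symmetric_monoidal_def by auto

lemma copy_arr [simp]: "arr C (copy C X)" "dom C (copy C X) = X" "cod C (copy C X) = otim C X X"
  and disc_arr [simp]: "arr C (disc C X)" "dom C (disc C X) = X" "cod C (disc C X) = unito C"
  and cocopy_arr [simp]: "arr C (cocopy C X)" "dom C (cocopy C X) = otim C X X" "cod C (cocopy C X) = X"
  and codisc_arr [simp]: "arr C (codisc C X)" "dom C (codisc C X) = unito C" "cod C (codisc C X) = X"
  using cartesian unfolding cartesian_bicategory_def hom_def by auto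

lemma copy_counit: "copy C X \<Zcomp> (disc C X \<otimes> \<one> X) = \<one> X" "copy C X \<Zcomp> (\<one> X \<otimes> disc C X) = \<one> X"
  and cocopy_unit: "(codisc C X \<otimes> \<one> X) \<Zcomp> cocopy C X = \<one> X" "(\<one> X \<otimes> codisc C X) \<Zcomp> cocopy C X = \<one> X"
  and frobenius: "(copy C X \<otimes> \<one> X) \<Zcomp> (\<one> X \<otimes> cocopy C X) = cocopy C X \<Zcomp> copy C X"
    "(\<one> X \<otimes> copy C X) \<Zcomp> (cocopy C X \<otimes> \<one> X) = cocopy C X \<Zcomp> copy C X"
  using cartesian unfolding cartesian_bicategory_def by auto

lemma cup_arr [simp]: "arr C (cup C X)" "dom C (cup C X) = unito C" "cod C (cup C X) = otim C X X"
  and cap_arr [simp]: "arr C (cap C X)" "dom C (cap C X) = otim C X X" "cod C (cap C X) = unito C"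
  unfolding cup_def cap_def by auto

lemma whisker_left: "\<lbrakk>arr C f; arr C g; cod C f = dom C g\<rbrakk>
    \<Longrightarrow> (\<one> W \<otimes> f) \<Zcomp> (\<one> W \<otimes> g) = \<one> W \<otimes> (f \<Zcomp> g)"
  and whisker_right: "\<lbrakk>arr C f; arr C g; cod C f = dom C g\<rbrakk>
    \<Longrightarrow> (f \<otimes> \<one> W) \<Zcomp> (g \<otimes> \<one> W) = (f \<Zcomp> g) \<otimes> \<one> W"
  using interchange[of "\<one> W" "\<one> W" f g] interchange[of f g "\<one> W" "\<one> W"] by simp_all

lemma slide:
  assumes "arr C f" "arr C g"
  shows "(f \<otimes> \<one> (dom C g)) \<Zcomp> (\<one> (cod C f) \<otimes> g) = (\<one> (dom C f) \<otimes> g) \<Zcomp> (f \<otimes> \<one> (cod C g))"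
  using interchange[of f "\<one> (cod C f)" "\<one> (dom C g)" g] interchange[of "\<one> (dom C f)" f g "\<one> (cod C g)"]
    assms by simp

lemma snake_left: "(\<one> X \<otimes> cup C X) \<Zcomp> (cap C X \<otimes> \<one> X) = \<one> X"
proof -
  have "(\<one> X \<otimes> cup C X) \<Zcomp> (cap C X \<otimes> \<one> X)
      = (\<one> X \<otimes> codisc C X) \<Zcomp> ((\<one> X \<otimes> copy C X) \<Zcomp> (cocopy C X \<otimes> \<one> X)) \<Zcomp> (disc C X \<otimes> \<one> X)"
    unfolding cup_def cap_def by (simp add: whisker_left[symmetric] whisker_right[symmetric])
  also have "\<dots> = ((\<one> X \<otimes> codisc C X) \<Zcomp> cocopy C X) \<Zcomp> copy C X \<Zcomp> (disc C X \<otimes> \<one> X)"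
    unfolding frobenius by simp
  also have "\<dots> = \<one> X"
    unfolding cocopy_unit copy_counit by simp
  finally show ?thesis .
qed

lemma snake_right: "(cup C X \<otimes> \<one> X) \<Zcomp> (\<one> X \<otimes> cap C X) = \<one> X"
proof -
  have "(cup C X \<otimes> \<one> X) \<Zcomp> (\<one> X \<otimes> cap C X)
      = (codisc C X \<otimes> \<one> X) \<Zcomp> ((copy C X \<otimes> \<one> X) \<Zcomp> (\<one> X \<otimes> cocopy C X)) \<Zcomp> (\<one> X \<otimes> disc C X)"
    unfolding cup_def cap_def by (simp add: whisker_left[symmetric] whisker_right[symmetric])
  also have "\<dots> = ((codisc C X \<otimes> \<one> X) \<Zcomp> cocopy C X) \<Zcomp> copy C X \<Zcomp> (\<one> X \<otimes> disc C X)"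
    unfolding frobenius by simp
  also have "\<dots> = \<one> X"
    unfolding cocopy_unit copy_counit by simp
  finally show ?thesis .
qed

lemma conv_cup_cap:
  "c \<in> hom C X Y \<Longrightarrow> conv C c = (\<one> Y \<otimes> cup C X) \<Zcomp> (\<one> Y \<otimes> c \<otimes> \<one> X) \<Zcomp> (cap C Y \<otimes> \<one> X)"
  unfolding conv_def Let_def cup_def[symmetric] cap_def[symmetric] hom_def by simp

lemma left_conv_cup_cap:
  "c \<in> hom C X Y \<Longrightarrow> left_conv C c = (cup C X \<otimes> \<one> Y) \<Zcomp> (\<one> X \<otimes> c \<otimes> \<one> Y) \<Zcomp> (\<one> X \<otimes> cap C Y)"
  unfolding left_conv_def hom_def by simp

lemma conv_hom: "c \<in> hom C X Y \<Longrightarrow> conv C c \<in> hom C Y X"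
  and left_conv_hom: "c \<in> hom C X Y \<Longrightarrow> left_conv C c \<in> hom C Y X"
  by (auto simp: conv_cup_cap left_conv_cup_cap) (auto simp: hom_def)

lemma left_conv_conv:
  assumes c: "c \<in> hom C X Y"
  shows "left_conv C (conv C c) = c"
proof -
  have [simp]: "arr C c" "dom C c = X" "cod C c = Y"
    using c unfolding hom_def by simp_all
  have "left_conv C (conv C c) = (cup C Y \<otimes> \<one> X) \<Zcomp> (\<one> Y \<otimes> \<one> Y \<otimes> cup C X \<otimes> \<one> X)
      \<Zcomp> (\<one> Y \<otimes> \<one> Y \<otimes> c \<otimes> \<one> X \<otimes> \<one> X) \<Zcomp> (\<one> Y \<otimes> cap C Y \<otimes> \<one> X \<otimes> \<one> X) \<Zcomp> (\<one> Y \<otimes> cap C X)"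
    unfolding left_conv_cup_cap[OF conv_hom[OF c]] unfolding conv_cup_cap[OF c]
    by (simp add: whisker_left[symmetric] whisker_right[symmetric])
  also have "\<dots> = (cup C Y \<otimes> \<one> X) \<Zcomp> (\<one> Y \<otimes> \<one> Y \<otimes> cup C X \<otimes> \<one> X)
      \<Zcomp> (\<one> Y \<otimes> \<one> Y \<otimes> c \<otimes> \<one> X \<otimes> \<one> X) \<Zcomp> (\<one> Y \<otimes> \<one> Y \<otimes> \<one> Y \<otimes> cap C X) \<Zcomp> (\<one> Y \<otimes> cap C Y)"
  proof -
    have "(cap C Y \<otimes> \<one> X \<otimes> \<one> X) \<Zcomp> cap C X = (\<one> Y \<otimes> \<one> Y \<otimes> cap C X) \<Zcomp> cap C Y"
      using slide[of "cap C Y" "cap C X"] by simp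
    then show ?thesis by (simp add: whisker_left)
  qed
  also have "\<dots> = (cup C Y \<otimes> \<one> X) \<Zcomp> (\<one> Y \<otimes> \<one> Y \<otimes> cup C X \<otimes> \<one> X)
      \<Zcomp> (\<one> Y \<otimes> \<one> Y \<otimes> \<one> X \<otimes> cap C X) \<Zcomp> (\<one> Y \<otimes> \<one> Y \<otimes> c) \<Zcomp> (\<one> Y \<otimes> cap C Y)"
  proof -
    have "(c \<otimes> \<one> X \<otimes> \<one> X) \<Zcomp> (\<one> Y \<otimes> cap C X) = (\<one> X \<otimes> cap C X) \<Zcomp> c"
      using slide[of c "cap C X"] by simp
    then have sliding: "(\<one> Y \<otimes> \<one> Y \<otimes> c \<otimes> \<one> X \<otimes> \<one> X) \<Zcomp> (\<one> Y \<otimes> \<one> Y \<otimes> \<one> Y \<otimes> cap C X)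
        = (\<one> Y \<otimes> \<one> Y \<otimes> \<one> X \<otimes> cap C X) \<Zcomp> (\<one> Y \<otimes> \<one> Y \<otimes> c)"
      using whisker_left[of _ _ "otim C Y Y"] by simp
    show ?thesis by (simp add: seq_pair_subst[OF sliding])
  qed
  also have "\<dots> = (cup C Y \<otimes> \<one> X) \<Zcomp> (\<one> Y \<otimes> \<one> Y \<otimes> c) \<Zcomp> (\<one> Y \<otimes> cap C Y)"
  proof -
    have snake: "(\<one> Y \<otimes> \<one> Y \<otimes> cup C X \<otimes> \<one> X) \<Zcomp> (\<one> Y \<otimes> \<one> Y \<otimes> \<one> X \<otimes> cap C X)
        = \<one> (otim C Y (otim C Y X))"
      using whisker_left[of _ _ "otim C Y Y"] snake_right[of X] by simp
    show ?thesis by (simp add: seq_pair_cancel[OF snake])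
  qed
  also have "\<dots> = c \<Zcomp> (cup C Y \<otimes> \<one> Y) \<Zcomp> (\<one> Y \<otimes> cap C Y)"
  proof -
    have sliding: "(cup C Y \<otimes> \<one> X) \<Zcomp> (\<one> Y \<otimes> \<one> Y \<otimes> c) = c \<Zcomp> (cup C Y \<otimes> \<one> Y)"
      using slide[of "cup C Y" c] by simp
    show ?thesis by (simp add: seq_pair_subst[OF sliding])
  qed
  also have "\<dots> = c"
    by (simp add: snake_right)
  finally show ?thesis .
qed

lemma conv_left_conv:
  assumes g: "g \<in> hom C X Y"
  shows "conv C (left_conv C g) = g"
proof -
  have [simp]: "arr C g" "dom C g = X" "cod C g = Y"
    using g unfolding hom_def by simp_all
  have "conv C (left_conv C g) = (\<one> X \<otimes> cup C Y) \<Zcomp> (\<one> X \<otimes> cup C X \<otimes> \<one> Y \<otimes> \<one> Y)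
      \<Zcomp> (\<one> X \<otimes> \<one> X \<otimes> g \<otimes> \<one> Y \<otimes> \<one> Y) \<Zcomp> (\<one> X \<otimes> \<one> X \<otimes> cap C Y \<otimes> \<one> Y) \<Zcomp> (cap C X \<otimes> \<one> Y)"
    unfolding conv_cup_cap[OF left_conv_hom[OF g]] unfolding left_conv_cup_cap[OF g]
    by (simp add: whisker_left[symmetric] whisker_right[symmetric])
  also have "\<dots> = (\<one> X \<otimes> cup C X) \<Zcomp> (\<one> X \<otimes> \<one> X \<otimes> \<one> X \<otimes> cup C Y)
      \<Zcomp> (\<one> X \<otimes> \<one> X \<otimes> g \<otimes> \<one> Y \<otimes> \<one> Y) \<Zcomp> (\<one> X \<otimes> \<one> X \<otimes> cap C Y \<otimes> \<one> Y) \<Zcomp> (cap C X \<otimes> \<one> Y)"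
  proof -
    have "cup C Y \<Zcomp> (cup C X \<otimes> \<one> Y \<otimes> \<one> Y) = cup C X \<Zcomp> (\<one> X \<otimes> \<one> X \<otimes> cup C Y)"
      using slide[of "cup C X" "cup C Y"] by simp
    then have sliding: "(\<one> X \<otimes> cup C Y) \<Zcomp> (\<one> X \<otimes> cup C X \<otimes> \<one> Y \<otimes> \<one> Y)
        = (\<one> X \<otimes> cup C X) \<Zcomp> (\<one> X \<otimes> \<one> X \<otimes> \<one> X \<otimes> cup C Y)"
      using whisker_left[of _ _ X] by simp
    show ?thesis by (simp add: seq_pair_subst[OF sliding])
  qed
  also have "\<dots> = (\<one> X \<otimes> cup C X) \<Zcomp> (\<one> X \<otimes> \<one> X \<otimes> g) \<Zcomp> (\<one> X \<otimes> \<one> X \<otimes> \<one> Y \<otimes> cup C Y)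
      \<Zcomp> (\<one> X \<otimes> \<one> X \<otimes> cap C Y \<otimes> \<one> Y) \<Zcomp> (cap C X \<otimes> \<one> Y)"
  proof -
    have "(\<one> X \<otimes> cup C Y) \<Zcomp> (g \<otimes> \<one> Y \<otimes> \<one> Y) = g \<Zcomp> (\<one> Y \<otimes> cup C Y)"
      using slide[of g "cup C Y"] by simp
    then have sliding: "(\<one> X \<otimes> \<one> X \<otimes> \<one> X \<otimes> cup C Y) \<Zcomp> (\<one> X \<otimes> \<one> X \<otimes> g \<otimes> \<one> Y \<otimes> \<one> Y)
        = (\<one> X \<otimes> \<one> X \<otimes> g) \<Zcomp> (\<one> X \<otimes> \<one> X \<otimes> \<one> Y \<otimes> cup C Y)"
      using whisker_left[of _ _ "otim C X X"] by simp
    show ?thesis by (simp add: seq_pair_subst[OF sliding])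
  qed
  also have "\<dots> = (\<one> X \<otimes> cup C X) \<Zcomp> (\<one> X \<otimes> \<one> X \<otimes> g) \<Zcomp> (cap C X \<otimes> \<one> Y)"
  proof -
    have snake: "(\<one> X \<otimes> \<one> X \<otimes> \<one> Y \<otimes> cup C Y) \<Zcomp> (\<one> X \<otimes> \<one> X \<otimes> cap C Y \<otimes> \<one> Y)
        = \<one> (otim C X (otim C X Y))"
      using whisker_left[of _ _ "otim C X X"] snake_left[of Y] by simp
    show ?thesis by (simp add: seq_pair_cancel[OF snake])
  qed
  also have "\<dots> = (\<one> X \<otimes> cup C X) \<Zcomp> (cap C X \<otimes> \<one> X) \<Zcomp> g"
    using slide[of "cap C X" g] by simp
  also have "\<dots> = g"
    by (rule seq_pair_cancel[OF snake_left]) simp_all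
  finally show ?thesis .
qed

lemma conv_mono:
  assumes le: "le C f f'"
  shows "le C (conv C f) (conv C f')"
proof -
  obtain X Y where f: "f \<in> hom C X Y" and f': "f' \<in> hom C X Y"
    using le_arr[OF le] unfolding hom_def by blast
  then have [simp]: "arr C f" "dom C f = X" "cod C f = Y"
    unfolding hom_def by simp_all
  show ?thesis
    unfolding conv_cup_cap[OF f] conv_cup_cap[OF f'] by (rule le_seq le_tens le_refl le | simp)+
qed

lemma left_conv_mono:
  assumes le: "le C f f'"
  shows "le C (left_conv C f) (left_conv C f')"
proof -
  obtain X Y where f: "f \<in> hom C X Y" and f': "f' \<in> hom C X Y"
    using le_arr[OF le] unfolding hom_def by blast
  then have [simp]: "arr C f" "dom C f = X" "cod C f = Y"
    unfolding hom_def by simp_all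
  show ?thesis
    unfolding left_conv_cup_cap[OF f] left_conv_cup_cap[OF f'] by (rule le_seq le_tens le_refl le | simp)+
qed

lemma conv_order_iso:
  assumes "boolean_homs C"
  shows "hom_order_iso C (conv C) (left_conv C) X Y Y X"
proof -
  interpret boolean_homsets C
    using assms by unfold_locales
  show ?thesis
    by unfold_locales
      (simp_all add: conv_hom left_conv_hom left_conv_conv conv_left_conv conv_mono left_conv_mono)
qed

end

theorem lemma56:
  fixes C :: "('o, 'a) pbicat"
  assumes "peircean_bicategory C"
    and "arr C c"
  shows "conv C (neg C c) = neg C (conv C c)"
proof -
  have "cartesian_bicategory C" and "boolean_homs C"
    using assms(1) unfolding peircean_bicategory_def by simp_all
  then interpret hom_order_iso C "conv C" "left_conv C" "dom C c" "cod C c" "cod C c" "dom C c"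
    by (rule cartesian_bicat.conv_order_iso[OF cartesian_bicat.intro])
  show ?thesis
    using F_neg assms(2) unfolding hom_def by simp
qed

end
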